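(* Let $n\ge3$, $\Omega\subset\mathbb{R}^n$ a smooth bounded domain and $m>0$. There exists a constant $C>0$ depending only on $n$, $m$ and $\Omega$ such that for every $U\in H^1_{0,L}(\mathcal{C})$, $$\int_{\mathcal{C}}|\nabla U|^2dx\,dt+m^2\int_{\mathcal{C}}U^2dx\,dt-m\int_\Omega U(x,0)^2dx\ \ge\ C\int_{\mathcal{C}}|\nabla U|^2dx\,dt.$$
   Context: $\mathcal{C}=\Omega\times(0,\infty)$ with points $(x,t)$, $\partial_L\mathcal{C}=\partial\Omega\times(0,\infty)$, $H^1_{0,L}(\mathcal{C})=\{U\in H^1(\mathcal{C}):U=0\text{ on }\partial_L\mathcal{C}\}$ (trace sense), and $U(x,0)$ denotes the trace of $U$ on $\Omega\times\{0\}$. *)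

theory Defs
  imports "HOL-Analysis.Analysis"
begin

fun dirderivs :: "'a::euclidean_space list \<Rightarrow> ('a \<Rightarrow> real) \<Rightarrow> 'a \<Rightarrow> real" where
  "dirderivs [] f = f"
| "dirderivs (v # vs) f = (\<lambda>x. frechet_derivative (dirderivs vs f) (at x) v)"

definition smooth_fun :: "('a::euclidean_space \<Rightarrow> real) \<Rightarrow> bool" where
  "smooth_fun f \<longleftrightarrow> (\<forall>vs x. dirderivs vs f differentiable (at x))"

definition supp_closed :: "('a::euclidean_space \<Rightarrow> real) \<Rightarrow> 'a set" where
  "supp_closed f = closure {x. f x \<noteq> 0}"

definition grad :: "('a::euclidean_space \<Rightarrow> real) \<Rightarrow> 'a \<Rightarrow> 'a" where
  "grad f x = (\<Sum>b\<in>Basis. frechet_derivative f (at x) b *\<^sub>R b)"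

definition smooth_bounded_domain :: "('a::euclidean_space) set \<Rightarrow> bool" where
  "smooth_bounded_domain \<Omega> \<longleftrightarrow> bounded \<Omega> \<and> connected \<Omega> \<and> \<Omega> \<noteq> {} \<and>
     (\<exists>\<rho>. smooth_fun \<rho> \<and> \<Omega> = {x. \<rho> x < 0} \<and>
          (\<forall>x. \<rho> x = 0 \<longrightarrow> grad \<rho> x \<noteq> 0))"

definition cyl :: "'a set \<Rightarrow> ('a \<times> real) set" where
  "cyl \<Omega> = \<Omega> \<times> {0<..}"

definition weak_grad :: "'a::euclidean_space set \<Rightarrow> ('a \<Rightarrow> real) \<Rightarrow> ('a \<Rightarrow> 'a) \<Rightarrow> bool" where
  "weak_grad C U G \<longleftrightarrow>
     (\<forall>\<phi> v. smooth_fun \<phi> \<and> compact (supp_closed \<phi>) \<and> supp_closed \<phi> \<subseteq> C \<longrightarrow>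
        (\<integral>p. U p * frechet_derivative \<phi> (at p) v \<partial>lebesgue_on C)
          = - (\<integral>p. (G p \<bullet> v) * \<phi> p \<partial>lebesgue_on C))"

definition H1 :: "'a::euclidean_space set \<Rightarrow> ('a \<Rightarrow> real) \<Rightarrow> ('a \<Rightarrow> 'a) \<Rightarrow> bool" where
  "H1 C U G \<longleftrightarrow>
     U \<in> borel_measurable (lebesgue_on C) \<and> G \<in> borel_measurable (lebesgue_on C) \<and>
     integrable (lebesgue_on C) (\<lambda>p. (U p)\<^sup>2) \<and>
     integrable (lebesgue_on C) (\<lambda>p. (norm (G p))\<^sup>2) \<and>
     weak_grad C U G"

text \<open>\<open>U \<in> H^1_{0,L}(\<Omega> \<times> (0,\<infinity>))\<close> with weak gradient \<open>G\<close> and trace \<open>g\<close> on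
  \<open>\<Omega> \<times> {0}\<close>: \<open>U\<close> is the \<open>H^1\<close>-limit of smooth compactly supported functions
  vanishing on the lateral boundary, and \<open>g\<close> is the \<open>L^2(\<Omega>)\<close>-limit of their
  restrictions to \<open>t = 0\<close> (trace in the sense of the continuous trace operator).\<close>
definition H10L_trace ::
  "'a::euclidean_space set \<Rightarrow> ('a \<times> real \<Rightarrow> real) \<Rightarrow> ('a \<times> real \<Rightarrow> 'a \<times> real) \<Rightarrow> ('a \<Rightarrow> real) \<Rightarrow> bool" where
  "H10L_trace \<Omega> U G g \<longleftrightarrow>
     H1 (cyl \<Omega>) U G \<and>
     g \<in> borel_measurable (lebesgue_on \<Omega>) \<and> integrable (lebesgue_on \<Omega>) (\<lambda>x. (g x)\<^sup>2) \<and>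
     (\<exists>\<phi> :: nat \<Rightarrow> ('a \<times> real \<Rightarrow> real).
        (\<forall>k. smooth_fun (\<phi> k) \<and> compact (supp_closed (\<phi> k)) \<and>
             (\<forall>x\<in>frontier \<Omega>. \<forall>t. \<phi> k (x, t) = 0)) \<and>
        (\<lambda>k. \<integral>p. (\<phi> k p - U p)\<^sup>2 \<partial>lebesgue_on (cyl \<Omega>)) \<longlonglongrightarrow> 0 \<and>
        (\<lambda>k. \<integral>p. (norm (grad (\<phi> k) p - G p))\<^sup>2 \<partial>lebesgue_on (cyl \<Omega>)) \<longlonglongrightarrow> 0 \<and>
        (\<lambda>k. \<integral>x. (\<phi> k (x, 0) - g x)\<^sup>2 \<partial>lebesgue_on \<Omega>) \<longlonglongrightarrow> 0)"

end

(* For phi smooth, compactly supported and vanishing on the lateral boundary, the fundamental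
   theorem of calculus along a segment ending at a zero of phi, together with
   |2 phi D_w phi| <= a phi^2 + (D_w phi)^2 / a, bounds phi^2 at the start of the segment.
   Vertical segments starting at t = 0 give the trace inequality
     int_Omega phi(x,0)^2 <= a ||phi||^2 + ||D_t phi||^2 / a   for every a > 0,
   and segments in a coordinate direction e, followed up to their first exit from Omega, give
   the Poincare inequality ||phi||^2 <= 4 D^2 ||D_e phi||^2 when Omega has width below D in
   direction e. For a = m (1 + eta), m times the trace term is at most
   m^2 (1 + eta) ||phi||^2 + ||D_t phi||^2 / (1 + eta); the excess m^2 eta ||phi||^2 is paid
   by the Poincare inequality, and since (D_t phi)^2 + (D_e phi)^2 <= |grad phi|^2, a fixed
   fraction of ||grad phi||^2 is left over. All three quadratic terms converge along the smooth
   sequence defining H^1_{0,L} and the trace, so the inequality passes to U. *)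

theory Submission
  imports Defs
begin

section \<open>Smooth compactly supported functions\<close>

lemma smooth_fun_has_derivative:
  "smooth_fun \<phi> \<Longrightarrow> (\<phi> has_derivative frechet_derivative \<phi> (at x)) (at x)"
  unfolding smooth_fun_def by (metis dirderivs.simps(1) frechet_derivative_works)

lemma smooth_fun_continuous: "smooth_fun \<phi> \<Longrightarrow> continuous_on UNIV \<phi>"
  by (meson continuous_at_imp_continuous_on has_derivative_continuous smooth_fun_has_derivative)

lemma smooth_fun_derivative_continuous:
  assumes "smooth_fun \<phi>"
  shows "continuous_on UNIV (\<lambda>x. frechet_derivative \<phi> (at x) v)"
proof -
  have "dirderivs [v] \<phi> differentiable (at x)" for x
    using assms unfolding smooth_fun_def by blast
  then show ?thesis
    by (simp add: continuous_at_imp_continuous_on differentiable_imp_continuous_within)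
qed

lemma smooth_fun_continuous_slice:
  fixes \<phi> :: "'a::euclidean_space \<times> 'b::euclidean_space \<Rightarrow> real"
  assumes "smooth_fun \<phi>"
  shows "continuous_on UNIV (\<lambda>x. \<phi> (x, c))"
  by (rule continuous_on_compose2[OF smooth_fun_continuous[OF assms]]) (auto intro!: continuous_intros)

lemma grad_continuous: "smooth_fun \<phi> \<Longrightarrow> continuous_on UNIV (grad \<phi>)"
  unfolding grad_def[abs_def] by (intro continuous_intros smooth_fun_derivative_continuous)

lemma has_real_derivative_along_line:
  assumes "smooth_fun \<phi>"
  shows "((\<lambda>s. \<phi> (p + s *\<^sub>R w)) has_real_derivative
           frechet_derivative \<phi> (at (p + s *\<^sub>R w)) w) (at s)"
proof -
  let ?D = "frechet_derivative \<phi> (at (p + s *\<^sub>R w))"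
  have line: "((\<lambda>s. p + s *\<^sub>R w) has_derivative (\<lambda>h. h *\<^sub>R w)) (at s)"
    by (auto intro!: derivative_eq_intros)
  have D: "(\<phi> has_derivative ?D) (at (p + s *\<^sub>R w))"
    by (rule smooth_fun_has_derivative[OF assms])
  have "((\<lambda>s. \<phi> (p + s *\<^sub>R w)) has_derivative (\<lambda>h. ?D (h *\<^sub>R w))) (at s)"
    using has_derivative_compose[OF line D] by (simp add: o_def)
  moreover have "(\<lambda>h. ?D (h *\<^sub>R w)) = (\<lambda>h. ?D w * h)"
    using has_derivative_linear[OF D] by (auto simp: linear_scale)
  ultimately show ?thesis by (simp add: has_field_derivative_def)
qed

lemma not_in_supp_closed_eq_0: "x \<notin> supp_closed \<phi> \<Longrightarrow> \<phi> x = 0"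
  unfolding supp_closed_def by (auto simp: closure_def)

lemma frechet_derivative_not_in_supp_closed:
  assumes "x \<notin> supp_closed \<phi>"
  shows "frechet_derivative \<phi> (at x) v = 0"
proof -
  have "(\<phi> has_derivative (\<lambda>_. 0)) (at x)"
  proof (rule has_derivative_transform_within_open)
    show "((\<lambda>_. 0) has_derivative (\<lambda>_. 0)) (at x)" by simp
    show "open (- supp_closed \<phi>)" by (simp add: supp_closed_def open_Compl)
  qed (use assms not_in_supp_closed_eq_0[of _ \<phi>] in auto)
  then have "frechet_derivative \<phi> (at x) = (\<lambda>_. 0)" by (metis frechet_derivative_at)
  then show ?thesis by simp
qed

lemma grad_not_in_supp_closed: "x \<notin> supp_closed \<phi> \<Longrightarrow> grad \<phi> x = 0"
  by (simp add: grad_def frechet_derivative_not_in_supp_closed)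

lemma frechet_derivative_power2_add_le_norm_grad:
  fixes \<phi> :: "'a::euclidean_space \<Rightarrow> real"
  assumes uv: "u \<in> Basis" "v \<in> Basis" "u \<noteq> v"
  shows "(frechet_derivative \<phi> (at p) u)\<^sup>2 + (frechet_derivative \<phi> (at p) v)\<^sup>2
           \<le> (norm (grad \<phi> p))\<^sup>2"
proof -
  let ?g = "grad \<phi> p"
  have inner_grad: "?g \<bullet> b = frechet_derivative \<phi> (at p) b" if "b \<in> Basis" for b
    using that unfolding grad_def by (simp add: inner_sum_left inner_Basis if_distrib cong: if_cong)
  have "(\<Sum>b\<in>{u, v}. (?g \<bullet> b)\<^sup>2) \<le> (\<Sum>b\<in>Basis. (?g \<bullet> b)\<^sup>2)"
    by (rule sum_mono2) (use uv in auto)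
  also have "\<dots> = ?g \<bullet> ?g"
    by (subst euclidean_inner) (simp add: power2_eq_square)
  also have "\<dots> = (norm ?g)\<^sup>2"
    by (simp add: power2_norm_eq_inner)
  finally show ?thesis
    using uv by (simp add: inner_grad)
qed

lemma open_cylinder: "open \<Omega> \<Longrightarrow> open (\<Omega> \<times> {0::real<..})"
  by (intro open_Times open_greaterThan)

lemma borel_measurable_lebesgue_on_continuous:
  "continuous_on UNIV f \<Longrightarrow> S \<in> sets lebesgue \<Longrightarrow> f \<in> borel_measurable (lebesgue_on S)"
  by (rule continuous_imp_measurable_on_sets_lebesgue[OF continuous_on_subset]) auto

lemma integrable_lebesgue_on_compact_support:
  fixes f :: "'a::euclidean_space \<Rightarrow> real"
  assumes S: "S \<in> sets lebesgue" and K: "compact K" and f: "continuous_on UNIV f"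
    and vanish: "\<And>x. x \<notin> K \<Longrightarrow> f x = 0"
  shows "integrable (lebesgue_on S) f"
proof -
  have "(\<lambda>x. indicator K x *\<^sub>R f x) = f"
    using vanish by (force simp: indicator_def)
  moreover have "integrable lborel (\<lambda>x. indicator K x *\<^sub>R f x)"
    by (rule borel_integrable_compact[OF K continuous_on_subset[OF f]]) simp
  ultimately have "integrable lebesgue f"
    using f by (subst integrable_completion) (auto intro: borel_measurable_continuous_onI)
  then have "integrable lebesgue (\<lambda>x. indicator S x *\<^sub>R f x)"
    by (rule integrable_mult_indicator[OF S])
  then show ?thesis using S by (subst integrable_restrict_space) auto
qed

lemma smooth_fun_compact_support_integrable:
  fixes \<phi> :: "'a::euclidean_space \<Rightarrow> real"
  assumes \<phi>: "smooth_fun \<phi>" "compact (supp_closed \<phi>)" and S: "S \<in> sets lebesgue"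
  shows "integrable (lebesgue_on S) (\<lambda>p. (\<phi> p)\<^sup>2)"
    and "integrable (lebesgue_on S) (\<lambda>p. (frechet_derivative \<phi> (at p) v)\<^sup>2)"
    and "integrable (lebesgue_on S) (\<lambda>p. (norm (grad \<phi> p))\<^sup>2)"
proof -
  note vanish = not_in_supp_closed_eq_0[of _ \<phi>] frechet_derivative_not_in_supp_closed[of _ \<phi>]
    grad_not_in_supp_closed[of _ \<phi>]
  note continuous = smooth_fun_continuous[OF \<phi>(1)] smooth_fun_derivative_continuous[OF \<phi>(1)]
    grad_continuous[OF \<phi>(1)]
  show "integrable (lebesgue_on S) (\<lambda>p. (\<phi> p)\<^sup>2)"
    by (rule integrable_lebesgue_on_compact_support[OF S \<phi>(2)])
       (simp_all add: vanish continuous_on_power continuous)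
  show "integrable (lebesgue_on S) (\<lambda>p. (frechet_derivative \<phi> (at p) v)\<^sup>2)"
    by (rule integrable_lebesgue_on_compact_support[OF S \<phi>(2)])
       (simp_all add: vanish continuous_on_power continuous)
  show "integrable (lebesgue_on S) (\<lambda>p. (norm (grad \<phi> p))\<^sup>2)"
    by (rule integrable_lebesgue_on_compact_support[OF S \<phi>(2)])
       (simp_all add: vanish continuous_on_power continuous_on_norm continuous)
qed

lemma smooth_fun_compact_support_trace_integrable:
  fixes \<phi> :: "'a::euclidean_space \<times> real \<Rightarrow> real"
  assumes \<phi>: "smooth_fun \<phi>" "compact (supp_closed \<phi>)" and \<Omega>: "\<Omega> \<in> sets lebesgue"
  shows "integrable (lebesgue_on \<Omega>) (\<lambda>x. (\<phi> (x, 0))\<^sup>2)"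
proof (rule integrable_lebesgue_on_compact_support[OF \<Omega>])
  show "compact (fst ` supp_closed \<phi>)"
    using \<phi> by (intro compact_continuous_image continuous_intros)
  show "continuous_on UNIV (\<lambda>x. (\<phi> (x, 0))\<^sup>2)"
    by (intro continuous_on_power smooth_fun_continuous_slice[OF \<phi>(1)])
  show "(\<phi> (x, 0))\<^sup>2 = 0" if "x \<notin> fst ` supp_closed \<phi>" for x
    using that not_in_supp_closed_eq_0[of "(x, 0)" \<phi>] by force
qed

lemma ennreal_integral_lebesgue_on:
  fixes f :: "'a::euclidean_space \<Rightarrow> real"
  assumes S: "S \<in> sets borel" and f: "f \<in> borel_measurable borel" "\<And>x. 0 \<le> f x"
    and int: "integrable (lebesgue_on S) f"
  shows "ennreal (\<integral>x. f x \<partial>lebesgue_on S) = (\<integral>\<^sup>+x. ennreal (indicator S x * f x) \<partial>lborel)"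
proof -
  have "ennreal (\<integral>x. f x \<partial>lebesgue_on S) = (\<integral>\<^sup>+x. ennreal (f x) \<partial>lebesgue_on S)"
    using int f by (subst nn_integral_eq_integral) auto
  also have "\<dots> = (\<integral>\<^sup>+x. ennreal (f x) * indicator S x \<partial>lebesgue)"
    using S by (intro nn_integral_restrict_space) auto
  also have "\<dots> = (\<integral>\<^sup>+x. ennreal (indicator S x * f x) \<partial>lborel)"
    unfolding nn_integral_completion by (intro nn_integral_cong) (simp split: split_indicator)
  finally show ?thesis .
qed

lemma integral_lebesgue_on_le_via_nn_integral:
  fixes f :: "'a::euclidean_space \<Rightarrow> real" and g :: "'b::euclidean_space \<Rightarrow> real"
  assumes sets: "S \<in> sets borel" "T \<in> sets borel"
    and meas: "f \<in> borel_measurable borel" "g \<in> borel_measurable borel"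
    and nonneg: "\<And>x. 0 \<le> f x" "\<And>y. 0 \<le> g y" "0 \<le> c"
    and int: "integrable (lebesgue_on S) f" "integrable (lebesgue_on T) g"
    and le: "(\<integral>\<^sup>+x. ennreal (indicator S x * f x) \<partial>lborel)
      \<le> ennreal c * (\<integral>\<^sup>+y. ennreal (indicator T y * g y) \<partial>lborel)"
  shows "(\<integral>x. f x \<partial>lebesgue_on S) \<le> c * (\<integral>y. g y \<partial>lebesgue_on T)"
proof -
  have "ennreal (\<integral>x. f x \<partial>lebesgue_on S) \<le> ennreal (c * (\<integral>y. g y \<partial>lebesgue_on T))"
    using le sets meas nonneg int
    by (simp add: ennreal_integral_lebesgue_on ennreal_mult integral_nonneg_AE)
  then show ?thesis
    using nonneg by (simp add: ennreal_le_iff integral_nonneg_AE)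
qed

lemma nn_integral_lborel_translate:
  fixes g :: "'a::euclidean_space \<Rightarrow> ennreal"
  assumes "g \<in> borel_measurable borel"
  shows "(\<integral>\<^sup>+p. g (p + c) \<partial>lborel) = (\<integral>\<^sup>+p. g p \<partial>lborel)"
proof -
  have "(\<integral>\<^sup>+p. g p \<partial>lborel) = (\<integral>\<^sup>+p. g p \<partial>distr lborel borel ((+) c))"
    by (simp add: lborel_distr_plus)
  also have "\<dots> = (\<integral>\<^sup>+p. g (c + p) \<partial>lborel)"
    using assms by (intro nn_integral_distr) auto
  finally show ?thesis by (simp add: add.commute)
qed

lemma nn_integral_lborel_translates_interval:
  fixes \<psi> :: "'a::euclidean_space \<Rightarrow> ennreal"
  assumes \<psi>: "\<psi> \<in> borel_measurable borel" and D: "0 \<le> D"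
  shows "(\<integral>\<^sup>+p. (\<integral>\<^sup>+s. indicator {0..D} s * \<psi> (p + s *\<^sub>R v) \<partial>lborel) \<partial>lborel)
    = ennreal D * (\<integral>\<^sup>+p. \<psi> p \<partial>lborel)"
proof -
  have "(\<lambda>q::'a \<times> real. fst q + snd q *\<^sub>R v) \<in> borel_measurable borel"
    by (intro borel_measurable_continuous_onI continuous_intros)
  then have [measurable]: "(\<lambda>q. \<psi> (fst q + snd q *\<^sub>R v)) \<in> borel_measurable borel"
    by (rule measurable_compose[OF _ \<psi>])
  have "(snd :: 'a \<times> real \<Rightarrow> real) \<in> borel_measurable borel"
    by (intro borel_measurable_continuous_onI continuous_intros)
  then have [measurable]: "(\<lambda>q::'a \<times> real. indicator {0..D} (snd q) :: ennreal) \<in> borel_measurable borel"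
    by (rule measurable_compose[OF _ borel_measurable_indicator]) simp
  have "(\<lambda>q::'a \<times> real. indicator {0..D} (snd q) * \<psi> (fst q + snd q *\<^sub>R v)) \<in> borel_measurable borel"
    by measurable
  then have meas: "(\<lambda>q. indicator {0..D} (snd q) * \<psi> (fst q + snd q *\<^sub>R v))
      \<in> borel_measurable (lborel \<Otimes>\<^sub>M lborel)"
    by (simp add: lborel_prod)
  have "(\<integral>\<^sup>+p. (\<integral>\<^sup>+s. indicator {0..D} s * \<psi> (p + s *\<^sub>R v) \<partial>lborel) \<partial>lborel)
      = (\<integral>\<^sup>+s. (\<integral>\<^sup>+p. indicator {0..D} s * \<psi> (p + s *\<^sub>R v) \<partial>lborel) \<partial>lborel)"
    using lborel_pair.Fubini[OF meas] by simp
  also have "\<dots> = (\<integral>\<^sup>+s. (\<integral>\<^sup>+p. \<psi> p \<partial>lborel) * indicator {0..D} s \<partial>lborel)"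
  proof (rule nn_integral_cong)
    fix s :: real
    have "(\<lambda>p. p + s *\<^sub>R v) \<in> borel_measurable borel"
      by (intro borel_measurable_continuous_onI continuous_intros)
    then have "(\<lambda>p. \<psi> (p + s *\<^sub>R v)) \<in> borel_measurable borel"
      by (rule measurable_compose[OF _ \<psi>])
    then show "(\<integral>\<^sup>+p. indicator {0..D} s * \<psi> (p + s *\<^sub>R v) \<partial>lborel)
        = (\<integral>\<^sup>+p. \<psi> p \<partial>lborel) * indicator {0..D} s"
      by (simp add: nn_integral_cmult nn_integral_lborel_translate[OF \<psi>] mult.commute)
  qed
  also have "\<dots> = (\<integral>\<^sup>+p. \<psi> p \<partial>lborel) * emeasure lborel {0..D}"
    by (rule nn_integral_cmult_indicator) simp
  also have "\<dots> = ennreal D * (\<integral>\<^sup>+p. \<psi> p \<partial>lborel)"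
    using D by (simp add: mult.commute)
  finally show ?thesis .
qed

section \<open>Convergence of squared L2 norms\<close>

lemma abs_2_mult_le_weighted_power2:
  fixes a y z :: real
  assumes "a > 0"
  shows "\<bar>2 * y * z\<bar> \<le> a * y\<^sup>2 + z\<^sup>2 / a"
proof -
  have "0 \<le> (a * \<bar>y\<bar> - \<bar>z\<bar>)\<^sup>2 / a" using assms by simp
  also have "\<dots> = a * y\<^sup>2 - 2 * \<bar>y\<bar> * \<bar>z\<bar> + z\<^sup>2 / a"
    using assms by (simp add: power2_eq_square field_simps)
  finally show ?thesis by (simp add: abs_mult)
qed

lemma norm_power2_le_peter_paul:
  fixes u v :: "'a::real_normed_vector"
  assumes "\<epsilon> > 0"
  shows "(norm u)\<^sup>2 \<le> (1 + \<epsilon>) * (norm v)\<^sup>2 + (1 + 1/\<epsilon>) * (norm (u - v))\<^sup>2"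
proof -
  have "norm u \<le> norm v + norm (u - v)"
    using norm_triangle_ineq[of v "u - v"] by simp
  then have "(norm u)\<^sup>2 \<le> (norm v + norm (u - v))\<^sup>2"
    by (simp add: power_mono)
  also have "\<dots> \<le> (1 + \<epsilon>) * (norm v)\<^sup>2 + (1 + 1/\<epsilon>) * (norm (u - v))\<^sup>2"
    using abs_2_mult_le_weighted_power2[OF assms, of "norm v" "norm (u - v)"]
    by (simp add: power2_sum algebra_simps)
  finally show ?thesis .
qed

lemma integrable_norm_diff_power2:
  fixes F G :: "'b \<Rightarrow> 'c::{banach, second_countable_topology}"
  assumes "F \<in> borel_measurable M" "G \<in> borel_measurable M"
    and "integrable M (\<lambda>p. (norm (F p))\<^sup>2)" "integrable M (\<lambda>p. (norm (G p))\<^sup>2)"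
  shows "integrable M (\<lambda>p. (norm (F p - G p))\<^sup>2)"
proof (rule Bochner_Integration.integrable_bound)
  show "integrable M (\<lambda>p. 2 * (norm (G p))\<^sup>2 + 2 * (norm (F p))\<^sup>2)"
    using assms by simp
  show "(\<lambda>p. (norm (F p - G p))\<^sup>2) \<in> borel_measurable M"
    using assms by measurable
  show "AE p in M. norm ((norm (F p - G p))\<^sup>2) \<le> norm (2 * (norm (G p))\<^sup>2 + 2 * (norm (F p))\<^sup>2)"
    using norm_power2_le_peter_paul[of 1 "F p - G p" "- G p" for p] by simp
qed

lemma integral_norm_power2_le_peter_paul:
  fixes X Y :: "'b \<Rightarrow> 'c::{banach, second_countable_topology}"
  assumes \<epsilon>: "\<epsilon> > 0" and meas: "X \<in> borel_measurable M" "Y \<in> borel_measurable M"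
    and int: "integrable M (\<lambda>p. (norm (X p))\<^sup>2)" "integrable M (\<lambda>p. (norm (Y p))\<^sup>2)"
  shows "(\<integral>p. (norm (X p))\<^sup>2 \<partial>M)
    \<le> (1 + \<epsilon>) * (\<integral>p. (norm (Y p))\<^sup>2 \<partial>M) + (1 + 1/\<epsilon>) * (\<integral>p. (norm (X p - Y p))\<^sup>2 \<partial>M)"
proof -
  have XY: "integrable M (\<lambda>p. (norm (X p - Y p))\<^sup>2)"
    using meas int by (rule integrable_norm_diff_power2)
  have "(\<integral>p. (norm (X p))\<^sup>2 \<partial>M)
      \<le> (\<integral>p. (1 + \<epsilon>) * (norm (Y p))\<^sup>2 + (1 + 1/\<epsilon>) * (norm (X p - Y p))\<^sup>2 \<partial>M)"
    using int XY norm_power2_le_peter_paul[OF \<epsilon>] by (intro integral_mono) auto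
  also have "\<dots> = (1 + \<epsilon>) * (\<integral>p. (norm (Y p))\<^sup>2 \<partial>M) + (1 + 1/\<epsilon>) * (\<integral>p. (norm (X p - Y p))\<^sup>2 \<partial>M)"
    using int XY by simp
  finally show ?thesis .
qed

lemma tendsto_of_peter_paul_bounds:
  fixes x d :: "nat \<Rightarrow> real"
  assumes a: "0 \<le> a" and d: "d \<longlonglongrightarrow> 0"
    and upper: "\<And>\<epsilon> k. \<epsilon> > 0 \<Longrightarrow> x k \<le> (1 + \<epsilon>) * a + (1 + 1/\<epsilon>) * d k"
    and lower: "\<And>\<epsilon> k. \<epsilon> > 0 \<Longrightarrow> a \<le> (1 + \<epsilon>) * x k + (1 + 1/\<epsilon>) * d k"
  shows "x \<longlonglongrightarrow> a"
proof (rule tendstoI)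
  fix r :: real
  assume r: "r > 0"
  define \<epsilon> where "\<epsilon> = min 1 (r / (2 * a + 3))"
  have \<epsilon>: "0 < \<epsilon>" "\<epsilon> \<le> 1"
    using r a by (auto simp: \<epsilon>_def)
  have "\<epsilon> * (2 * a + 3) \<le> r / (2 * a + 3) * (2 * a + 3)"
    using a by (intro mult_right_mono) (auto simp: \<epsilon>_def)
  then have \<epsilon>r: "\<epsilon> * (2 * a + 3) \<le> r"
    using a by simp
  have "((\<lambda>k. (1 + 1/\<epsilon>) * d k) \<longlongrightarrow> 0) sequentially"
    by (rule tendsto_mult_right_zero[OF d])
  then have "eventually (\<lambda>k. \<bar>(1 + 1/\<epsilon>) * d k\<bar> < \<epsilon>) sequentially"
    using \<epsilon>(1) by (auto dest: tendstoD)
  then show "eventually (\<lambda>k. dist (x k) a < r) sequentially"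
  proof (rule eventually_mono)
    fix k
    assume small: "\<bar>(1 + 1/\<epsilon>) * d k\<bar> < \<epsilon>"
    have above: "x k - a < \<epsilon> * (a + 1)"
      using upper[OF \<epsilon>(1), of k] small by (simp add: algebra_simps)
    have "\<epsilon> * (a + 1) \<le> a + 1"
      using \<epsilon>(2) a by (simp add: mult_left_le_one_le)
    then have "\<epsilon> * x k \<le> \<epsilon> * (2 * a + 1)"
      using above \<epsilon>(1) by (intro mult_left_mono) auto
    then have below: "a - x k < \<epsilon> * (2 * a + 2)"
      using lower[OF \<epsilon>(1), of k] small by (simp add: algebra_simps)
    show "dist (x k) a < r"
      using above below \<epsilon>(1) \<epsilon>r a by (simp add: dist_real_def abs_less_iff algebra_simps)
  qed
qed

lemma tendsto_integral_norm_power2: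
  fixes F :: "'b \<Rightarrow> 'c::{banach, second_countable_topology}" and Fs :: "nat \<Rightarrow> 'b \<Rightarrow> 'c"
  assumes meas: "F \<in> borel_measurable M" "\<And>k. Fs k \<in> borel_measurable M"
    and int: "integrable M (\<lambda>p. (norm (F p))\<^sup>2)" "\<And>k. integrable M (\<lambda>p. (norm (Fs k p))\<^sup>2)"
    and lim: "(\<lambda>k. \<integral>p. (norm (Fs k p - F p))\<^sup>2 \<partial>M) \<longlonglongrightarrow> 0"
  shows "(\<lambda>k. \<integral>p. (norm (Fs k p))\<^sup>2 \<partial>M) \<longlonglongrightarrow> (\<integral>p. (norm (F p))\<^sup>2 \<partial>M)"
proof (rule tendsto_of_peter_paul_bounds[OF _ lim])
  show "\<epsilon> > 0 \<Longrightarrow> (\<integral>p. (norm (Fs k p))\<^sup>2 \<partial>M) \<le> (1 + \<epsilon>) * (\<integral>p. (norm (F p))\<^sup>2 \<partial>M)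
      + (1 + 1/\<epsilon>) * (\<integral>p. (norm (Fs k p - F p))\<^sup>2 \<partial>M)" for \<epsilon> k
    using meas int by (intro integral_norm_power2_le_peter_paul)
  show "\<epsilon> > 0 \<Longrightarrow> (\<integral>p. (norm (F p))\<^sup>2 \<partial>M) \<le> (1 + \<epsilon>) * (\<integral>p. (norm (Fs k p))\<^sup>2 \<partial>M)
      + (1 + 1/\<epsilon>) * (\<integral>p. (norm (Fs k p - F p))\<^sup>2 \<partial>M)" for \<epsilon> k
    using integral_norm_power2_le_peter_paul[of \<epsilon> F M "Fs k"] meas int by (simp add: norm_minus_commute)
qed simp

section \<open>Trace and Poincare inequalities for smooth functions\<close>

(* AM-GM majorant of |D_w (phi^2)| = |2 phi D_w phi|. *)
definition weighted_dir_energy :: "real \<Rightarrow> 'a::euclidean_space \<Rightarrow> ('a \<Rightarrow> real) \<Rightarrow> 'a \<Rightarrow> real" where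
  "weighted_dir_energy a w \<phi> p = a * (\<phi> p)\<^sup>2 + (frechet_derivative \<phi> (at p) w)\<^sup>2 / a"

lemma weighted_dir_energy_nonneg: "0 < a \<Longrightarrow> 0 \<le> weighted_dir_energy a w \<phi> p"
  by (simp add: weighted_dir_energy_def)

lemma weighted_dir_energy_continuous:
  assumes "smooth_fun \<phi>" "0 < a"
  shows "continuous_on UNIV (weighted_dir_energy a w \<phi>)"
  unfolding weighted_dir_energy_def[abs_def]
  using assms smooth_fun_continuous smooth_fun_derivative_continuous
  by (intro continuous_intros) auto

lemma integral_weighted_dir_energy:
  assumes \<phi>: "smooth_fun \<phi>" "compact (supp_closed \<phi>)" and S: "S \<in> sets lebesgue"
  shows "integrable (lebesgue_on S) (weighted_dir_energy a w \<phi>)"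
    and "(\<integral>p. weighted_dir_energy a w \<phi> p \<partial>lebesgue_on S)
      = a * (\<integral>p. (\<phi> p)\<^sup>2 \<partial>lebesgue_on S) + (\<integral>p. (frechet_derivative \<phi> (at p) w)\<^sup>2 \<partial>lebesgue_on S) / a"
  using smooth_fun_compact_support_integrable[OF \<phi> S]
  by (simp_all add: weighted_dir_energy_def[abs_def])

lemma borel_measurable_indicator_weighted_dir_energy:
  assumes "S \<in> sets borel" "smooth_fun \<phi>" "0 < a"
  shows "(\<lambda>p. ennreal (indicator S p * weighted_dir_energy a w \<phi> p)) \<in> borel_measurable borel"
  using assms weighted_dir_energy_continuous
  by (intro measurable_compose[OF _ measurable_ennreal] borel_measurable_times
      borel_measurable_indicator borel_measurable_continuous_onI)

lemma power2_le_integral_along_segment: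
  fixes \<phi> :: "'a::euclidean_space \<Rightarrow> real"
  assumes \<phi>: "smooth_fun \<phi>" and a: "0 < a" and L: "0 \<le> L" and endpoint: "\<phi> (p + L *\<^sub>R w) = 0"
  shows "(\<phi> p)\<^sup>2 \<le> integral {0..L} (\<lambda>s. weighted_dir_energy a w \<phi> (p + s *\<^sub>R w))"
proof -
  define f where "f s = \<phi> (p + s *\<^sub>R w)" for s
  define f' where "f' s = frechet_derivative \<phi> (at (p + s *\<^sub>R w)) w" for s
  have "((\<lambda>s. (f s)\<^sup>2) has_real_derivative 2 * f s * f' s) (at s)" for s
    using DERIV_power[OF has_real_derivative_along_line[OF \<phi>, of p w s], of 2]
    by (simp add: f_def f'_def mult_ac)
  then have "((\<lambda>s. 2 * f s * f' s) has_integral (f L)\<^sup>2 - (f 0)\<^sup>2) {0..L}"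
    by (intro fundamental_theorem_of_calculus[OF L])
      (simp add: has_real_derivative_iff_has_vector_derivative[symmetric] has_field_derivative_at_within)
  from has_integral_neg[OF this]
  have ftc: "((\<lambda>s. - (2 * f s * f' s)) has_integral (\<phi> p)\<^sup>2) {0..L}"
    using endpoint by (simp add: f_def)
  have "continuous_on UNIV (\<lambda>s. weighted_dir_energy a w \<phi> (p + s *\<^sub>R w))"
    by (rule continuous_on_compose2[OF weighted_dir_energy_continuous[OF \<phi> a]])
      (auto intro!: continuous_intros)
  then have "(\<lambda>s. weighted_dir_energy a w \<phi> (p + s *\<^sub>R w)) integrable_on {0..L}"
    by (rule integrable_continuous_interval[OF continuous_on_subset]) simp
  moreover have "- (2 * f s * f' s) \<le> weighted_dir_energy a w \<phi> (p + s *\<^sub>R w)" for s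
    using abs_2_mult_le_weighted_power2[OF a, of "f s" "f' s"]
    by (simp add: weighted_dir_energy_def f_def f'_def)
  ultimately show ?thesis
    by (intro has_integral_le[OF ftc integrable_integral])
qed

lemma power2_le_nn_integral_segment:
  fixes \<phi> :: "'a::euclidean_space \<Rightarrow> real"
  assumes \<phi>: "smooth_fun \<phi>" and a: "0 < a" and L: "0 \<le> L" and endpoint: "\<phi> (p + L *\<^sub>R w) = 0"
    and segment: "\<And>s. 0 < s \<Longrightarrow> s < L \<Longrightarrow> p + s *\<^sub>R w \<in> S"
  shows "ennreal ((\<phi> p)\<^sup>2) \<le> (\<integral>\<^sup>+s. ennreal (indicator {0..L} s * indicator S (p + s *\<^sub>R w)
      * weighted_dir_energy a w \<phi> (p + s *\<^sub>R w)) \<partial>lborel)"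
proof -
  define F where "F s = weighted_dir_energy a w \<phi> (p + s *\<^sub>R w)" for s
  have "continuous_on UNIV F"
    unfolding F_def by (rule continuous_on_compose2[OF weighted_dir_energy_continuous[OF \<phi> a]])
      (auto intro!: continuous_intros)
  then have F_int: "F integrable_on {0..L}"
    by (rule integrable_continuous_interval[OF continuous_on_subset]) simp
  have "ennreal ((\<phi> p)\<^sup>2) \<le> ennreal (integral {0..L} F)"
    unfolding F_def by (intro ennreal_leI power2_le_integral_along_segment[OF \<phi> a L endpoint])
  also have "\<dots> = (\<integral>\<^sup>+s. ennreal (indicator {0..L} s * F s) \<partial>lborel)"
    using weighted_dir_energy_nonneg[OF a]
    by (intro nn_integral_has_integral_lebesgue[symmetric] integrable_integral[OF F_int]) (simp add: F_def)
  also have "\<dots> = (\<integral>\<^sup>+s. ennreal (indicator {0..L} s * indicator S (p + s *\<^sub>R w) * F s) \<partial>lborel)"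
  proof (rule nn_integral_cong_AE)
    show "AE s in lborel. ennreal (indicator {0..L} s * F s)
        = ennreal (indicator {0..L} s * indicator S (p + s *\<^sub>R w) * F s)"
      using AE_lborel_singleton[of 0] AE_lborel_singleton[of L]
    proof eventually_elim
      fix s :: real
      assume "s \<noteq> 0" "s \<noteq> L"
      then show "ennreal (indicator {0..L} s * F s)
          = ennreal (indicator {0..L} s * indicator S (p + s *\<^sub>R w) * F s)"
        by (cases "s \<in> {0..L}") (simp_all add: segment)
    qed
  qed
  finally show ?thesis
    by (simp add: F_def)
qed

lemma ray_leaves_open_set_through_frontier:
  fixes \<Omega> :: "'a::real_normed_vector set"
  assumes \<Omega>: "open \<Omega>" and x: "x \<in> \<Omega>" and D: "0 \<le> D" and outside: "x + D *\<^sub>R e \<notin> \<Omega>"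
  obtains s\<^sub>0 where "0 < s\<^sub>0" "s\<^sub>0 \<le> D" "x + s\<^sub>0 *\<^sub>R e \<in> frontier \<Omega>"
    "\<And>s. 0 \<le> s \<Longrightarrow> s < s\<^sub>0 \<Longrightarrow> x + s *\<^sub>R e \<in> \<Omega>"
proof -
  define A where "A = {s. 0 \<le> s \<and> x + s *\<^sub>R e \<notin> \<Omega>}"
  define s\<^sub>0 where "s\<^sub>0 = Inf A"
  have "A = {0..} \<inter> (\<lambda>s. x + s *\<^sub>R e) -` (- \<Omega>)"
    by (auto simp: A_def)
  moreover have "closed ((\<lambda>s. x + s *\<^sub>R e) -` (- \<Omega>))"
    using \<Omega> by (intro continuous_closed_vimage) (auto intro!: continuous_intros)
  ultimately have "closed A"
    by (simp add: closed_Int)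
  moreover have "D \<in> A" "bdd_below A"
    using D outside by (auto simp: A_def bdd_below_def)
  ultimately have "s\<^sub>0 \<in> A" "s\<^sub>0 \<le> D"
    unfolding s\<^sub>0_def by (auto intro: closed_contains_Inf cInf_lower)
  then have s\<^sub>0: "0 < s\<^sub>0" "s\<^sub>0 \<le> D" "x + s\<^sub>0 *\<^sub>R e \<notin> \<Omega>"
    using x by (auto simp: A_def order.order_iff_strict)
  have inside: "x + s *\<^sub>R e \<in> \<Omega>" if "0 \<le> s" "s < s\<^sub>0" for s
    using that cInf_lower[OF _ \<open>bdd_below A\<close>, of s] by (force simp: A_def s\<^sub>0_def)
  have "(\<lambda>s. x + s *\<^sub>R e) ` closure {0..<s\<^sub>0} \<subseteq> closure \<Omega>"
    by (rule image_closure_subset)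
      (use inside in \<open>auto intro!: continuous_intros closure_subset[THEN subsetD]\<close>)
  then have "x + s\<^sub>0 *\<^sub>R e \<in> closure \<Omega>"
    using s\<^sub>0(1) by (auto simp: image_subset_iff)
  then have "x + s\<^sub>0 *\<^sub>R e \<in> frontier \<Omega>"
    using \<Omega> s\<^sub>0(3) by (simp add: frontier_def interior_open)
  with s\<^sub>0 inside show ?thesis
    using that by blast
qed

lemma trace_power2_le_nn_integral_vertical:
  fixes \<phi> :: "'a::euclidean_space \<times> real \<Rightarrow> real"
  assumes \<phi>: "smooth_fun \<phi>" "compact (supp_closed \<phi>)" and a: "0 < a" and x: "x \<in> \<Omega>"
  shows "ennreal ((\<phi> (x, 0))\<^sup>2)
    \<le> (\<integral>\<^sup>+t. ennreal (indicator (\<Omega> \<times> {0<..}) (x, t) * weighted_dir_energy a (0, 1) \<phi> (x, t)) \<partial>lborel)"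
proof -
  obtain R where R: "0 < R" "\<And>p. p \<in> supp_closed \<phi> \<Longrightarrow> norm p \<le> R"
    using compact_imp_bounded[OF \<phi>(2)] by (auto simp: bounded_pos)
  have "R + 1 \<le> norm (x, R + 1)"
    using norm_snd_le[of "R + 1" x] R(1) by simp
  then have "(x, R + 1) \<notin> supp_closed \<phi>"
    using R(2)[of "(x, R + 1)"] by linarith
  then have "\<phi> ((x, 0) + (R + 1) *\<^sub>R (0, 1)) = 0"
    by (simp add: not_in_supp_closed_eq_0)
  then have "ennreal ((\<phi> (x, 0))\<^sup>2) \<le> (\<integral>\<^sup>+s. ennreal (indicator {0..R + 1} s
      * indicator (\<Omega> \<times> {0::real<..}) ((x, 0) + s *\<^sub>R (0, 1))
      * weighted_dir_energy a (0, 1) \<phi> ((x, 0) + s *\<^sub>R (0, 1))) \<partial>lborel)"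
    using R(1) x by (intro power2_le_nn_integral_segment[OF \<phi>(1) a]) auto
  also have "\<dots> \<le> (\<integral>\<^sup>+t. ennreal (indicator (\<Omega> \<times> {0<..}) (x, t) * weighted_dir_energy a (0, 1) \<phi> (x, t)) \<partial>lborel)"
    using weighted_dir_energy_nonneg[OF a]
    by (intro nn_integral_mono) (simp split: split_indicator)
  finally show ?thesis .
qed

lemma trace_nn_integral_le:
  fixes \<phi> :: "'a::euclidean_space \<times> real \<Rightarrow> real"
  assumes \<phi>: "smooth_fun \<phi>" "compact (supp_closed \<phi>)" and \<Omega>: "open \<Omega>" and a: "0 < a"
  shows "(\<integral>\<^sup>+x. ennreal (indicator \<Omega> x * (\<phi> (x, 0))\<^sup>2) \<partial>lborel)
    \<le> (\<integral>\<^sup>+p. ennreal (indicator (\<Omega> \<times> {0<..}) p * weighted_dir_energy a (0, 1) \<phi> p) \<partial>lborel)"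
proof -
  let ?F = "\<lambda>p. ennreal (indicator (\<Omega> \<times> {0<..}) p * weighted_dir_energy a (0, 1) \<phi> p)"
  have "?F \<in> borel_measurable (lborel \<Otimes>\<^sub>M lborel)"
    using borel_measurable_indicator_weighted_dir_energy[OF borel_open[OF open_cylinder[OF \<Omega>]] \<phi>(1) a]
    by (simp add: lborel_prod)
  note Tonelli = lborel.nn_integral_fst[OF this]
  have "(\<integral>\<^sup>+x. ennreal (indicator \<Omega> x * (\<phi> (x, 0))\<^sup>2) \<partial>lborel) \<le> (\<integral>\<^sup>+x. (\<integral>\<^sup>+t. ?F (x, t) \<partial>lborel) \<partial>lborel)"
  proof (rule nn_integral_mono)
    show "ennreal (indicator \<Omega> x * (\<phi> (x, 0))\<^sup>2) \<le> (\<integral>\<^sup>+t. ?F (x, t) \<partial>lborel)" for x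
      using trace_power2_le_nn_integral_vertical[OF \<phi> a, of x \<Omega>] by (cases "x \<in> \<Omega>") simp_all
  qed
  also have "\<dots> = (\<integral>\<^sup>+p. ?F p \<partial>lborel)"
    using Tonelli by (simp add: lborel_prod)
  finally show ?thesis .
qed

lemma trace_inequality_smooth:
  fixes \<phi> :: "'a::euclidean_space \<times> real \<Rightarrow> real"
  assumes \<phi>: "smooth_fun \<phi>" "compact (supp_closed \<phi>)" and \<Omega>: "open \<Omega>" and a: "0 < a"
  shows "(\<integral>x. (\<phi> (x, 0))\<^sup>2 \<partial>lebesgue_on \<Omega>)
    \<le> a * (\<integral>p. (\<phi> p)\<^sup>2 \<partial>lebesgue_on (\<Omega> \<times> {0<..}))
      + (\<integral>p. (frechet_derivative \<phi> (at p) (0, 1))\<^sup>2 \<partial>lebesgue_on (\<Omega> \<times> {0<..})) / a"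
proof -
  have S: "\<Omega> \<times> {0::real<..} \<in> sets borel" "\<Omega> \<in> sets borel"
    using \<Omega> by (simp_all add: borel_open open_cylinder)
  have "(\<integral>x. (\<phi> (x, 0))\<^sup>2 \<partial>lebesgue_on \<Omega>)
      \<le> 1 * (\<integral>p. weighted_dir_energy a (0, 1) \<phi> p \<partial>lebesgue_on (\<Omega> \<times> {0<..}))"
  proof (rule integral_lebesgue_on_le_via_nn_integral[OF S(2,1)])
    show "(\<lambda>x. (\<phi> (x, 0))\<^sup>2) \<in> borel_measurable borel"
      by (intro borel_measurable_continuous_onI continuous_on_power smooth_fun_continuous_slice[OF \<phi>(1)])
    show "weighted_dir_energy a (0, 1) \<phi> \<in> borel_measurable borel"
      by (intro borel_measurable_continuous_onI weighted_dir_energy_continuous[OF \<phi>(1) a])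
    show "integrable (lebesgue_on \<Omega>) (\<lambda>x. (\<phi> (x, 0))\<^sup>2)"
      using S by (intro smooth_fun_compact_support_trace_integrable[OF \<phi>]) simp
    show "integrable (lebesgue_on (\<Omega> \<times> {0<..})) (weighted_dir_energy a (0, 1) \<phi>)"
      using S by (intro integral_weighted_dir_energy(1)[OF \<phi>]) simp
    show "(\<integral>\<^sup>+x. ennreal (indicator \<Omega> x * (\<phi> (x, 0))\<^sup>2) \<partial>lborel) \<le> ennreal 1 *
        (\<integral>\<^sup>+p. ennreal (indicator (\<Omega> \<times> {0<..}) p * weighted_dir_energy a (0, 1) \<phi> p) \<partial>lborel)"
      using trace_nn_integral_le[OF \<phi> \<Omega> a] by simp
  qed (use weighted_dir_energy_nonneg[OF a] in simp_all)
  then show ?thesis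
    using S by (simp add: integral_weighted_dir_energy(2)[OF \<phi>])
qed

lemma poincare_power2_le_nn_integral_horizontal:
  fixes \<phi> :: "'a::euclidean_space \<times> real \<Rightarrow> real"
  assumes \<phi>: "smooth_fun \<phi>" and \<Omega>: "open \<Omega>" and a: "0 < a"
    and D: "0 \<le> D" and width: "\<And>x. x \<in> \<Omega> \<Longrightarrow> x + D *\<^sub>R e \<notin> \<Omega>"
    and lateral: "\<And>x t. x \<in> frontier \<Omega> \<Longrightarrow> \<phi> (x, t) = 0" and p: "p \<in> \<Omega> \<times> {0<..}"
  shows "ennreal ((\<phi> p)\<^sup>2) \<le> (\<integral>\<^sup>+s. indicator {0..D} s * ennreal (indicator (\<Omega> \<times> {0<..}) (p + s *\<^sub>R (e, 0))
      * weighted_dir_energy a (e, 0) \<phi> (p + s *\<^sub>R (e, 0))) \<partial>lborel)"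
proof -
  obtain x t where xt: "p = (x, t)" "x \<in> \<Omega>" "0 < t"
    using p by auto
  obtain s\<^sub>0 where s\<^sub>0: "0 < s\<^sub>0" "s\<^sub>0 \<le> D" "x + s\<^sub>0 *\<^sub>R e \<in> frontier \<Omega>"
    "\<And>s. 0 \<le> s \<Longrightarrow> s < s\<^sub>0 \<Longrightarrow> x + s *\<^sub>R e \<in> \<Omega>"
    using ray_leaves_open_set_through_frontier[OF \<Omega> xt(2) D width[OF xt(2)]] by metis
  have "ennreal ((\<phi> p)\<^sup>2) \<le> (\<integral>\<^sup>+s. ennreal (indicator {0..s\<^sub>0} s * indicator (\<Omega> \<times> {0<..}) (p + s *\<^sub>R (e, 0))
      * weighted_dir_energy a (e, 0) \<phi> (p + s *\<^sub>R (e, 0))) \<partial>lborel)"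
    unfolding xt using s\<^sub>0 xt lateral by (intro power2_le_nn_integral_segment[OF \<phi> a]) auto
  also have "\<dots> \<le> (\<integral>\<^sup>+s. indicator {0..D} s * ennreal (indicator (\<Omega> \<times> {0<..}) (p + s *\<^sub>R (e, 0))
      * weighted_dir_energy a (e, 0) \<phi> (p + s *\<^sub>R (e, 0))) \<partial>lborel)"
    using s\<^sub>0(2) weighted_dir_energy_nonneg[OF a]
    by (intro nn_integral_mono) (auto simp: ennreal_leI split: split_indicator)
  finally show ?thesis .
qed

lemma poincare_nn_integral_le:
  fixes \<phi> :: "'a::euclidean_space \<times> real \<Rightarrow> real"
  assumes \<phi>: "smooth_fun \<phi>" and \<Omega>: "open \<Omega>" and a: "0 < a"
    and D: "0 < D" and width: "\<And>x. x \<in> \<Omega> \<Longrightarrow> x + D *\<^sub>R e \<notin> \<Omega>"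
    and lateral: "\<And>x t. x \<in> frontier \<Omega> \<Longrightarrow> \<phi> (x, t) = 0"
  shows "(\<integral>\<^sup>+p. ennreal (indicator (\<Omega> \<times> {0<..}) p * (\<phi> p)\<^sup>2) \<partial>lborel)
    \<le> ennreal D * (\<integral>\<^sup>+p. ennreal (indicator (\<Omega> \<times> {0<..}) p * weighted_dir_energy a (e, 0) \<phi> p) \<partial>lborel)"
proof -
  let ?F = "\<lambda>p. ennreal (indicator (\<Omega> \<times> {0<..}) p * weighted_dir_energy a (e, 0) \<phi> p)"
  have "(\<integral>\<^sup>+p. ennreal (indicator (\<Omega> \<times> {0<..}) p * (\<phi> p)\<^sup>2) \<partial>lborel)
      \<le> (\<integral>\<^sup>+p. (\<integral>\<^sup>+s. indicator {0..D} s * ?F (p + s *\<^sub>R (e, 0)) \<partial>lborel) \<partial>lborel)"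
  proof (rule nn_integral_mono)
    show "ennreal (indicator (\<Omega> \<times> {0<..}) p * (\<phi> p)\<^sup>2)
        \<le> (\<integral>\<^sup>+s. indicator {0..D} s * ?F (p + s *\<^sub>R (e, 0)) \<partial>lborel)" for p
      using poincare_power2_le_nn_integral_horizontal[OF \<phi> \<Omega> a _ width lateral, of p] D
      by (cases "p \<in> \<Omega> \<times> {0<..}") simp_all
  qed
  also have "\<dots> = ennreal D * (\<integral>\<^sup>+p. ?F p \<partial>lborel)"
    using D borel_measurable_indicator_weighted_dir_energy[OF borel_open[OF open_cylinder[OF \<Omega>]] \<phi> a]
    by (intro nn_integral_lborel_translates_interval) auto
  finally show ?thesis .
qed

lemma poincare_inequality_smooth:
  fixes \<phi> :: "'a::euclidean_space \<times> real \<Rightarrow> real"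
  assumes \<phi>: "smooth_fun \<phi>" "compact (supp_closed \<phi>)" and \<Omega>: "open \<Omega>"
    and D: "0 < D" and width: "\<And>x. x \<in> \<Omega> \<Longrightarrow> x + D *\<^sub>R e \<notin> \<Omega>"
    and lateral: "\<And>x t. x \<in> frontier \<Omega> \<Longrightarrow> \<phi> (x, t) = 0"
  shows "(\<integral>p. (\<phi> p)\<^sup>2 \<partial>lebesgue_on (\<Omega> \<times> {0<..}))
    \<le> 4 * D\<^sup>2 * (\<integral>p. (frechet_derivative \<phi> (at p) (e, 0))\<^sup>2 \<partial>lebesgue_on (\<Omega> \<times> {0<..}))"
proof -
  define a where "a = 1 / (2 * D)"
  define B where "B = (\<integral>p. (\<phi> p)\<^sup>2 \<partial>lebesgue_on (\<Omega> \<times> {0<..}))"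
  define E where "E = (\<integral>p. (frechet_derivative \<phi> (at p) (e, 0))\<^sup>2 \<partial>lebesgue_on (\<Omega> \<times> {0<..}))"
  have a: "0 < a"
    using D by (simp add: a_def)
  have S: "\<Omega> \<times> {0::real<..} \<in> sets borel"
    using \<Omega> by (simp add: borel_open open_cylinder)
  have "B \<le> D * (\<integral>p. weighted_dir_energy a (e, 0) \<phi> p \<partial>lebesgue_on (\<Omega> \<times> {0<..}))"
    unfolding B_def
  proof (rule integral_lebesgue_on_le_via_nn_integral[OF S S])
    show "(\<lambda>p. (\<phi> p)\<^sup>2) \<in> borel_measurable borel"
      by (intro borel_measurable_continuous_onI continuous_on_power smooth_fun_continuous[OF \<phi>(1)])
    show "weighted_dir_energy a (e, 0) \<phi> \<in> borel_measurable borel"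
      by (intro borel_measurable_continuous_onI weighted_dir_energy_continuous[OF \<phi>(1) a])
    show "integrable (lebesgue_on (\<Omega> \<times> {0<..})) (\<lambda>p. (\<phi> p)\<^sup>2)"
      using S by (intro smooth_fun_compact_support_integrable(1)[OF \<phi>]) simp
    show "integrable (lebesgue_on (\<Omega> \<times> {0<..})) (weighted_dir_energy a (e, 0) \<phi>)"
      using S by (intro integral_weighted_dir_energy(1)[OF \<phi>]) simp
  qed (use D weighted_dir_energy_nonneg[OF a] poincare_nn_integral_le[OF \<phi>(1) \<Omega> a D width lateral]
       in simp_all)
  also have "\<dots> = D * (a * B + E / a)"
    using S by (simp add: integral_weighted_dir_energy(2)[OF \<phi>] B_def E_def)
  also have "\<dots> = B / 2 + 2 * D\<^sup>2 * E"
    using D by (simp add: a_def field_simps power2_eq_square)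
  finally show ?thesis
    unfolding B_def E_def by linarith
qed

section \<open>Coercivity\<close>

lemma coercivity_from_trace_and_poincare:
  fixes N A E B T m P :: real
  assumes m: "0 < m" and P: "0 < P" and E: "0 \<le> E"
    and grad: "A + E \<le> N" and poincare: "B \<le> P * E"
    and trace: "\<And>a. 0 < a \<Longrightarrow> T \<le> a * B + A / a"
  shows "N / (2 + m\<^sup>2 * P) \<le> N + m\<^sup>2 * B - m * T"
proof -
  define c where "c = m\<^sup>2 * P"
  define \<eta> where "\<eta> = 1 / (1 + c)"
  have c: "0 < c"
    using m P by (simp add: c_def)
  have \<eta>: "0 < \<eta>" "0 < m + \<eta> * m"
    using c m by (simp_all add: \<eta>_def add_pos_pos)
  have "m * T \<le> m * (m * (1 + \<eta>) * B + A / (m * (1 + \<eta>)))"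
    using trace[of "m * (1 + \<eta>)"] m \<eta> by (intro mult_left_mono) auto
  also have "\<dots> = m\<^sup>2 * B + m\<^sup>2 * \<eta> * B + A / (1 + \<eta>)"
    using m \<eta> by (simp add: field_simps power2_eq_square)
  finally have mT: "m * T \<le> m\<^sup>2 * B + m\<^sup>2 * \<eta> * B + A / (1 + \<eta>)" .
  have "m\<^sup>2 * \<eta> * B \<le> m\<^sup>2 * \<eta> * (P * E)"
    using poincare \<eta> by (intro mult_left_mono) auto
  also have "\<dots> = (c * \<eta>) * E"
    by (simp add: c_def mult_ac)
  also have "\<dots> \<le> (1 / (1 + \<eta>)) * E"
    using c E by (intro mult_right_mono) (simp_all add: \<eta>_def field_simps power2_eq_square)
  also have "\<dots> \<le> (N - A) / (1 + \<eta>)"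
    using grad \<eta> by (simp add: divide_right_mono)
  finally have B: "m\<^sup>2 * \<eta> * B \<le> (N - A) / (1 + \<eta>)" .
  have "N / (2 + m\<^sup>2 * P) = N - N / (1 + \<eta>)"
    using c by (simp add: \<eta>_def c_def field_simps)
  also have "\<dots> = N - A / (1 + \<eta>) - (N - A) / (1 + \<eta>)"
    by (simp add: diff_divide_distrib)
  finally show ?thesis
    using mT B by linarith
qed

lemma energy_coercive_smooth:
  fixes \<phi> :: "'a::euclidean_space \<times> real \<Rightarrow> real"
  assumes \<phi>: "smooth_fun \<phi>" "compact (supp_closed \<phi>)" and \<Omega>: "open \<Omega>" and e: "e \<in> Basis"
    and D: "0 < D" and width: "\<And>x. x \<in> \<Omega> \<Longrightarrow> x + D *\<^sub>R e \<notin> \<Omega>"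
    and lateral: "\<And>x t. x \<in> frontier \<Omega> \<Longrightarrow> \<phi> (x, t) = 0" and m: "0 < m"
  shows "(\<integral>p. (norm (grad \<phi> p))\<^sup>2 \<partial>lebesgue_on (cyl \<Omega>)) / (2 + m\<^sup>2 * (4 * D\<^sup>2))
    \<le> (\<integral>p. (norm (grad \<phi> p))\<^sup>2 \<partial>lebesgue_on (cyl \<Omega>))
      + m\<^sup>2 * (\<integral>p. (\<phi> p)\<^sup>2 \<partial>lebesgue_on (cyl \<Omega>))
      - m * (\<integral>x. (\<phi> (x, 0))\<^sup>2 \<partial>lebesgue_on \<Omega>)"
proof -
  define A where "A = (\<integral>p. (frechet_derivative \<phi> (at p) (0, 1))\<^sup>2 \<partial>lebesgue_on (cyl \<Omega>))"
  define E where "E = (\<integral>p. (frechet_derivative \<phi> (at p) (e, 0))\<^sup>2 \<partial>lebesgue_on (cyl \<Omega>))"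
  have "cyl \<Omega> \<in> sets lebesgue"
    using \<Omega> by (simp add: cyl_def borel_open open_Times)
  note integrable = smooth_fun_compact_support_integrable[OF \<phi> this]
  have basis: "(0, 1) \<in> (Basis :: ('a \<times> real) set)" "(e, 0) \<in> (Basis :: ('a \<times> real) set)"
    "(0, 1) \<noteq> (e, 0)"
    using e by (auto simp: Basis_prod_def)
  have "A + E = (\<integral>p. (frechet_derivative \<phi> (at p) (0, 1))\<^sup>2
      + (frechet_derivative \<phi> (at p) (e, 0))\<^sup>2 \<partial>lebesgue_on (cyl \<Omega>))"
    unfolding A_def E_def using integrable by simp
  also have "\<dots> \<le> (\<integral>p. (norm (grad \<phi> p))\<^sup>2 \<partial>lebesgue_on (cyl \<Omega>))"
    using integrable frechet_derivative_power2_add_le_norm_grad[OF basis] by (intro integral_mono) auto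
  finally have grad: "A + E \<le> (\<integral>p. (norm (grad \<phi> p))\<^sup>2 \<partial>lebesgue_on (cyl \<Omega>))" .
  have poincare: "(\<integral>p. (\<phi> p)\<^sup>2 \<partial>lebesgue_on (cyl \<Omega>)) \<le> 4 * D\<^sup>2 * E"
    unfolding E_def cyl_def by (rule poincare_inequality_smooth[OF \<phi> \<Omega> D width lateral])
  have trace: "(\<integral>x. (\<phi> (x, 0))\<^sup>2 \<partial>lebesgue_on \<Omega>) \<le> a * (\<integral>p. (\<phi> p)\<^sup>2 \<partial>lebesgue_on (cyl \<Omega>)) + A / a"
    if "0 < a" for a
    unfolding A_def cyl_def by (rule trace_inequality_smooth[OF \<phi> \<Omega> that])
  show ?thesis
    using m D by (intro coercivity_from_trace_and_poincare[OF _ _ _ grad poincare trace])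
      (auto simp: E_def)
qed

lemma H10L_trace_approximation:
  fixes \<Omega> :: "'a::euclidean_space set"
  assumes H: "H10L_trace \<Omega> U G g" and \<Omega>: "open \<Omega>"
  obtains \<phi> :: "nat \<Rightarrow> 'a \<times> real \<Rightarrow> real" where
    "\<And>k. smooth_fun (\<phi> k)" "\<And>k. compact (supp_closed (\<phi> k))"
    "\<And>k x t. x \<in> frontier \<Omega> \<Longrightarrow> \<phi> k (x, t) = 0"
    "(\<lambda>k. \<integral>p. (norm (grad (\<phi> k) p))\<^sup>2 \<partial>lebesgue_on (cyl \<Omega>))
      \<longlonglongrightarrow> (\<integral>p. (norm (G p))\<^sup>2 \<partial>lebesgue_on (cyl \<Omega>))"
    "(\<lambda>k. \<integral>p. (\<phi> k p)\<^sup>2 \<partial>lebesgue_on (cyl \<Omega>)) \<longlonglongrightarrow> (\<integral>p. (U p)\<^sup>2 \<partial>lebesgue_on (cyl \<Omega>))"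
    "(\<lambda>k. \<integral>x. (\<phi> k (x, 0))\<^sup>2 \<partial>lebesgue_on \<Omega>) \<longlonglongrightarrow> (\<integral>x. (g x)\<^sup>2 \<partial>lebesgue_on \<Omega>)"
proof -
  have C: "cyl \<Omega> \<in> sets lebesgue" and \<Omega>_lebesgue: "\<Omega> \<in> sets lebesgue"
    using \<Omega> by (simp_all add: cyl_def borel_open open_cylinder)
  from H obtain \<phi> :: "nat \<Rightarrow> 'a \<times> real \<Rightarrow> real" where
    \<phi>: "\<And>k. smooth_fun (\<phi> k)" "\<And>k. compact (supp_closed (\<phi> k))"
      "\<And>k x t. x \<in> frontier \<Omega> \<Longrightarrow> \<phi> k (x, t) = 0"
    and lim_U: "(\<lambda>k. \<integral>p. (\<phi> k p - U p)\<^sup>2 \<partial>lebesgue_on (cyl \<Omega>)) \<longlonglongrightarrow> 0"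
    and lim_G: "(\<lambda>k. \<integral>p. (norm (grad (\<phi> k) p - G p))\<^sup>2 \<partial>lebesgue_on (cyl \<Omega>)) \<longlonglongrightarrow> 0"
    and lim_g: "(\<lambda>k. \<integral>x. (\<phi> k (x, 0) - g x)\<^sup>2 \<partial>lebesgue_on \<Omega>) \<longlonglongrightarrow> 0"
    unfolding H10L_trace_def by blast
  have U: "U \<in> borel_measurable (lebesgue_on (cyl \<Omega>))" "integrable (lebesgue_on (cyl \<Omega>)) (\<lambda>p. (U p)\<^sup>2)"
    and G: "G \<in> borel_measurable (lebesgue_on (cyl \<Omega>))"
      "integrable (lebesgue_on (cyl \<Omega>)) (\<lambda>p. (norm (G p))\<^sup>2)"
    and g: "g \<in> borel_measurable (lebesgue_on \<Omega>)" "integrable (lebesgue_on \<Omega>) (\<lambda>x. (g x)\<^sup>2)"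
    using H unfolding H10L_trace_def H1_def by auto
  note integrable = smooth_fun_compact_support_integrable[OF \<phi>(1,2) C]
    smooth_fun_compact_support_trace_integrable[OF \<phi>(1,2) \<Omega>_lebesgue]
  note measurable = borel_measurable_lebesgue_on_continuous[OF smooth_fun_continuous[OF \<phi>(1)] C]
    borel_measurable_lebesgue_on_continuous[OF grad_continuous[OF \<phi>(1)] C]
    borel_measurable_lebesgue_on_continuous[OF smooth_fun_continuous_slice[OF \<phi>(1)] \<Omega>_lebesgue]
  show thesis
  proof (rule that[OF \<phi>])
    show "(\<lambda>k. \<integral>p. (norm (grad (\<phi> k) p))\<^sup>2 \<partial>lebesgue_on (cyl \<Omega>))
        \<longlonglongrightarrow> (\<integral>p. (norm (G p))\<^sup>2 \<partial>lebesgue_on (cyl \<Omega>))"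
      using G integrable measurable by (intro tendsto_integral_norm_power2[OF _ _ _ _ lim_G])
    show "(\<lambda>k. \<integral>p. (\<phi> k p)\<^sup>2 \<partial>lebesgue_on (cyl \<Omega>)) \<longlonglongrightarrow> (\<integral>p. (U p)\<^sup>2 \<partial>lebesgue_on (cyl \<Omega>))"
      using tendsto_integral_norm_power2[of U _ \<phi>] lim_U U integrable measurable by simp
    show "(\<lambda>k. \<integral>x. (\<phi> k (x, 0))\<^sup>2 \<partial>lebesgue_on \<Omega>) \<longlonglongrightarrow> (\<integral>x. (g x)\<^sup>2 \<partial>lebesgue_on \<Omega>)"
      using tendsto_integral_norm_power2[of g _ "\<lambda>k x. \<phi> k (x, 0)"] lim_g g integrable measurable by simp
  qed
qed

lemma H10L_trace_energy_coercive:
  fixes \<Omega> :: "'a::euclidean_space set"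
  assumes H: "H10L_trace \<Omega> U G g" and \<Omega>: "open \<Omega>" and e: "e \<in> Basis"
    and D: "0 < D" and width: "\<And>x. x \<in> \<Omega> \<Longrightarrow> x + D *\<^sub>R e \<notin> \<Omega>" and m: "0 < m"
  shows "(\<integral>p. (norm (G p))\<^sup>2 \<partial>lebesgue_on (cyl \<Omega>)) / (2 + m\<^sup>2 * (4 * D\<^sup>2))
    \<le> (\<integral>p. (norm (G p))\<^sup>2 \<partial>lebesgue_on (cyl \<Omega>)) + m\<^sup>2 * (\<integral>p. (U p)\<^sup>2 \<partial>lebesgue_on (cyl \<Omega>))
      - m * (\<integral>x. (g x)\<^sup>2 \<partial>lebesgue_on \<Omega>)"
proof (rule H10L_trace_approximation[OF H \<Omega>])
  fix \<phi> :: "nat \<Rightarrow> 'a \<times> real \<Rightarrow> real"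
  assume \<phi>: "\<And>k. smooth_fun (\<phi> k)" "\<And>k. compact (supp_closed (\<phi> k))"
    "\<And>k x t. x \<in> frontier \<Omega> \<Longrightarrow> \<phi> k (x, t) = 0"
    and lim_grad: "(\<lambda>k. \<integral>p. (norm (grad (\<phi> k) p))\<^sup>2 \<partial>lebesgue_on (cyl \<Omega>))
      \<longlonglongrightarrow> (\<integral>p. (norm (G p))\<^sup>2 \<partial>lebesgue_on (cyl \<Omega>))"
    and lim_U: "(\<lambda>k. \<integral>p. (\<phi> k p)\<^sup>2 \<partial>lebesgue_on (cyl \<Omega>))
      \<longlonglongrightarrow> (\<integral>p. (U p)\<^sup>2 \<partial>lebesgue_on (cyl \<Omega>))"
    and lim_g: "(\<lambda>k. \<integral>x. (\<phi> k (x, 0))\<^sup>2 \<partial>lebesgue_on \<Omega>) \<longlonglongrightarrow> (\<integral>x. (g x)\<^sup>2 \<partial>lebesgue_on \<Omega>)"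
  have "0 < 2 + m\<^sup>2 * (4 * D\<^sup>2)"
    by (simp add: add_pos_nonneg)
  then show ?thesis
    using energy_coercive_smooth[OF \<phi>(1,2) \<Omega> e D width \<phi>(3) m]
    by (intro LIMSEQ_le[OF tendsto_divide[OF lim_grad tendsto_const]
          tendsto_diff[OF tendsto_add[OF lim_grad tendsto_mult[OF tendsto_const lim_U]]
            tendsto_mult[OF tendsto_const lim_g]]]) auto
qed

lemma smooth_bounded_domain_open_bounded:
  assumes "smooth_bounded_domain \<Omega>"
  shows "open \<Omega>" "bounded \<Omega>"
proof -
  obtain \<rho> where "bounded \<Omega>" "smooth_fun \<rho>" "\<Omega> = {x. \<rho> x < 0}"
    using assms unfolding smooth_bounded_domain_def by blast
  then show "open \<Omega>" "bounded \<Omega>"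
    using open_Collect_less[OF smooth_fun_continuous continuous_on_const] by auto
qed

lemma bounded_disjoint_translate:
  fixes \<Omega> :: "'a::real_normed_vector set"
  assumes "bounded \<Omega>" "norm e = 1"
  obtains D where "0 < D" "\<And>x. x \<in> \<Omega> \<Longrightarrow> x + D *\<^sub>R e \<notin> \<Omega>"
proof -
  obtain r where r: "0 < r" "\<Omega> \<subseteq> ball 0 r"
    using bounded_subset_ballD[OF assms(1)] by blast
  have "x + (2 * r) *\<^sub>R e \<notin> \<Omega>" if "x \<in> \<Omega>" for x
  proof
    assume "x + (2 * r) *\<^sub>R e \<in> \<Omega>"
    then have "norm (x + (2 * r) *\<^sub>R e) < r"
      using r(2) by auto
    moreover have "norm x < r"
      using r(2) that by auto
    moreover have "2 * r - norm x \<le> norm (x + (2 * r) *\<^sub>R e)"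
      using norm_diff_ineq[of "(2 * r) *\<^sub>R e" x] assms(2) r(1) by (simp add: add.commute)
    ultimately show False
      by linarith
  qed
  with r(1) show ?thesis
    using that[of "2 * r"] by simp
qed

theorem proposition2p4:
  fixes \<Omega> :: "(real ^ 'n) set" and m :: real
  assumes "CARD('n) \<ge> 3"
    and "smooth_bounded_domain \<Omega>"
    and "m > 0"
  shows "\<exists>C>0. \<forall>U G g. H10L_trace \<Omega> U G g \<longrightarrow>
           (\<integral>p. (norm (G p))\<^sup>2 \<partial>lebesgue_on (cyl \<Omega>))
           + m\<^sup>2 * (\<integral>p. (U p)\<^sup>2 \<partial>lebesgue_on (cyl \<Omega>))
           - m * (\<integral>x. (g x)\<^sup>2 \<partial>lebesgue_on \<Omega>)
           \<ge> C * (\<integral>p. (norm (G p))\<^sup>2 \<partial>lebesgue_on (cyl \<Omega>))"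
proof -
  note \<Omega> = smooth_bounded_domain_open_bounded[OF assms(2)]
  obtain e :: "real ^ 'n" where e: "e \<in> Basis"
    using nonempty_Basis by blast
  obtain D where D: "0 < D" "\<And>x. x \<in> \<Omega> \<Longrightarrow> x + D *\<^sub>R e \<notin> \<Omega>"
    using bounded_disjoint_translate[OF \<Omega>(2) norm_Basis[OF e]] by metis
  show ?thesis
  proof (intro exI[of _ "1 / (2 + m\<^sup>2 * (4 * D\<^sup>2))"] conjI allI impI)
    show "0 < 1 / (2 + m\<^sup>2 * (4 * D\<^sup>2))"
      by (simp add: add_pos_nonneg)
    fix U G g
    assume "H10L_trace \<Omega> U G g"
    from H10L_trace_energy_coercive[OF this \<Omega>(1) e D assms(3)]
    show "1 / (2 + m\<^sup>2 * (4 * D\<^sup>2)) * (\<integral>p. (norm (G p))\<^sup>2 \<partial>lebesgue_on (cyl \<Omega>))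
      \<le> (\<integral>p. (norm (G p))\<^sup>2 \<partial>lebesgue_on (cyl \<Omega>)) + m\<^sup>2 * (\<integral>p. (U p)\<^sup>2 \<partial>lebesgue_on (cyl \<Omega>))
        - m * (\<integral>x. (g x)\<^sup>2 \<partial>lebesgue_on \<Omega>)"
      by simp
  qed
qed

end
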